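(* Let $D$ be a connected locally finite C-homogeneous digraph. Then for every vertex $x\in VD$, neither the subdigraph induced by $N^+(x)$ nor the subdigraph induced by $N^-(x)$ is isomorphic to $H$.
   Context: A digraph has an irreflexive, antisymmetric edge relation; connectedness and local finiteness refer to the underlying undirected graph. $D$ is C-homogeneous if every isomorphism between finite connected induced subdigraphs extends to an automorphism of $D$. $N^+(x)=\{y: xy\in ED\}$, $N^-(x)=\{y: yx\in ED\}$. A digraph is homogeneous if every isomorphism between finite induced subdigraphs extends to an automorphism. By Lachlan's classification, a finite digraph is homogeneous iff it is isomorphic to the directed 4-cycle $C_4$, to $\bar K_n$ (no edges, $n$ vertices), $\bar K_n[C_3]$, $C_3[\bar K_n]$ ($n\ge 1$, lexicographic products with the directed triangle $C_3$), or to one further exceptional digraph; $H$ denotes this exceptional finite homogeneous digraph. *)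

theory Defs
  imports Main
begin

definition digraph :: "'a set \<Rightarrow> ('a \<Rightarrow> 'a \<Rightarrow> bool) \<Rightarrow> bool" where
  "digraph V E \<longleftrightarrow> (\<forall>x y. E x y \<longrightarrow> x \<in> V \<and> y \<in> V) \<and> (\<forall>x. \<not> E x x)
     \<and> (\<forall>x y. E x y \<longrightarrow> \<not> E y x)"

definition connected_on :: "('a \<Rightarrow> 'a \<Rightarrow> bool) \<Rightarrow> 'a set \<Rightarrow> bool" where
  "connected_on E A \<longleftrightarrow>
     (\<forall>x\<in>A. \<forall>y\<in>A. (\<lambda>u v. u \<in> A \<and> v \<in> A \<and> (E u v \<or> E v u))\<^sup>*\<^sup>* x y)"

definition locally_finite :: "'a set \<Rightarrow> ('a \<Rightarrow> 'a \<Rightarrow> bool) \<Rightarrow> bool" where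
  "locally_finite V E \<longleftrightarrow> (\<forall>x\<in>V. finite {y \<in> V. E x y \<or> E y x})"

definition dg_iso :: "'a set \<Rightarrow> ('a \<Rightarrow> 'a \<Rightarrow> bool) \<Rightarrow> 'b set \<Rightarrow> ('b \<Rightarrow> 'b \<Rightarrow> bool)
    \<Rightarrow> ('a \<Rightarrow> 'b) \<Rightarrow> bool" where
  "dg_iso V1 E1 V2 E2 f \<longleftrightarrow> bij_betw f V1 V2 \<and>
     (\<forall>x\<in>V1. \<forall>y\<in>V1. E1 x y \<longleftrightarrow> E2 (f x) (f y))"

definition dg_isomorphic :: "'a set \<Rightarrow> ('a \<Rightarrow> 'a \<Rightarrow> bool) \<Rightarrow> 'b set \<Rightarrow> ('b \<Rightarrow> 'b \<Rightarrow> bool)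
    \<Rightarrow> bool" where
  "dg_isomorphic V1 E1 V2 E2 \<longleftrightarrow> (\<exists>f. dg_iso V1 E1 V2 E2 f)"

definition automorphism :: "'a set \<Rightarrow> ('a \<Rightarrow> 'a \<Rightarrow> bool) \<Rightarrow> ('a \<Rightarrow> 'a) \<Rightarrow> bool" where
  "automorphism V E g \<longleftrightarrow> dg_iso V E V E g"

definition C_homogeneous :: "'a set \<Rightarrow> ('a \<Rightarrow> 'a \<Rightarrow> bool) \<Rightarrow> bool" where
  "C_homogeneous V E \<longleftrightarrow>
     (\<forall>A B f. A \<subseteq> V \<and> B \<subseteq> V \<and> finite A \<and> finite B \<and> connected_on E A \<and> connected_on E B
        \<and> dg_iso A E B E f \<longrightarrow> (\<exists>g. automorphism V E g \<and> (\<forall>x\<in>A. g x = f x)))"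

definition out_nbhd :: "'a set \<Rightarrow> ('a \<Rightarrow> 'a \<Rightarrow> bool) \<Rightarrow> 'a \<Rightarrow> 'a set" where
  "out_nbhd V E x = {y \<in> V. E x y}"

definition in_nbhd :: "'a set \<Rightarrow> ('a \<Rightarrow> 'a \<Rightarrow> bool) \<Rightarrow> 'a \<Rightarrow> 'a set" where
  "in_nbhd V E x = {y \<in> V. E y x}"

text \<open>The exceptional finite homogeneous digraph H of Lachlan's classification
  (Cherlin's H_0): the Cayley digraph of the quaternion group Q8 = {+-1,+-i,+-j,+-k}
  with connection set {i,j,k}. A unit (s,a) encodes (-1)^s * e_a with
  e_0 = 1, e_1 = i, e_2 = j, e_3 = k.\<close>

fun qbasis_mul :: "nat \<Rightarrow> nat \<Rightarrow> bool \<times> nat" where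
  "qbasis_mul a b =
    (if a = 0 then (False, b) else if b = 0 then (False, a) else if a = b then (True, 0)
     else if (a, b) = (1, 2) then (False, 3) else if (a, b) = (2, 3) then (False, 1)
     else if (a, b) = (3, 1) then (False, 2) else if (a, b) = (2, 1) then (True, 3)
     else if (a, b) = (3, 2) then (True, 1) else (True, 2))"

fun qmul :: "bool \<times> nat \<Rightarrow> bool \<times> nat \<Rightarrow> bool \<times> nat" where
  "qmul (s, a) (t, b) = (case qbasis_mul a b of (r, c) \<Rightarrow> ((s \<noteq> t) \<noteq> r, c))"

fun qinv :: "bool \<times> nat \<Rightarrow> bool \<times> nat" where
  "qinv (s, a) = (if a = 0 then (s, 0) else (\<not> s, a))"

definition H_vert :: "(bool \<times> nat) set" where
  "H_vert = {(s, a). a < 4}"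

definition H_edge :: "bool \<times> nat \<Rightarrow> bool \<times> nat \<Rightarrow> bool" where
  "H_edge x y \<longleftrightarrow> x \<in> H_vert \<and> y \<in> H_vert \<and> qmul (qinv x) y \<in> {(False, 1), (False, 2), (False, 3)}"

end

theory Submission
  imports Defs
begin

(*
  Suppose N+(x0) is isomorphic to H. Vertex-transitivity makes every out-neighbourhood a copy of H,
  and counting the arcs inside N-(b) shows that every arc has exactly three common in-neighbours.
  In H every out-neighbourhood is a directed triangle and every directed triangle is an
  out-neighbourhood. Hence each v in N+(x0) has a unique mate: an in-neighbour s of x0 with v -> s
  whose out-neighbours agree with those of v on N+(x0) and with those of x0 on N+(v); moreover every
  in-neighbour of x0 is a mate. Transported to H, the relation "a -> mate b" is invariant under
  Aut(H), since automorphisms of N+(x0) fixing x0 extend to D, and a case analysis in H shows that it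
  relates 1 only to itself. But counting the out-neighbours of v produces an in-neighbour of x0
  other than mate v that is a successor of v. In-neighbourhoods are handled by reversing all arcs,
  H being isomorphic to its reverse.
*)

section \<open>The digraph H\<close>

lemma H_vert_eq:
  "H_vert = set [(False,0), (False,1), (False,2), (False,3), (True,0), (True,1), (True,2), (True,3)]"
  unfolding H_vert_def by (auto simp: less_Suc_eq numeral_eq_Suc)

lemma card_H_vert: "card H_vert = 8"
  unfolding H_vert_eq by code_simp

definition H_arcs :: "((bool \<times> nat) \<times> (bool \<times> nat)) list" where
  "H_arcs =
    [((False,0),(False,1)), ((False,0),(False,2)), ((False,0),(False,3)),
     ((False,1),(False,3)), ((False,1),(True,0)), ((False,1),(True,2)),
     ((False,2),(False,1)), ((False,2),(True,0)), ((False,2),(True,3)),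
     ((False,3),(False,2)), ((False,3),(True,0)), ((False,3),(True,1)),
     ((True,0),(True,1)), ((True,0),(True,2)), ((True,0),(True,3)),
     ((True,1),(False,0)), ((True,1),(False,2)), ((True,1),(True,3)),
     ((True,2),(False,0)), ((True,2),(False,3)), ((True,2),(True,1)),
     ((True,3),(False,0)), ((True,3),(False,1)), ((True,3),(True,2))]"

lemma H_edge_eq: "H_edge = (\<lambda>x y. (x, y) \<in> set H_arcs)"
proof (intro ext)
  fix x y
  have "\<forall>x\<in>H_vert. \<forall>y\<in>H_vert. H_edge x y \<longleftrightarrow> (x, y) \<in> set H_arcs"
    unfolding H_edge_def H_vert_eq H_arcs_def by code_simp
  moreover have "\<forall>(x, y)\<in>set H_arcs. x \<in> H_vert \<and> y \<in> H_vert"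
    unfolding H_vert_eq H_arcs_def by code_simp
  ultimately show "H_edge x y \<longleftrightarrow> (x, y) \<in> set H_arcs"
    unfolding H_edge_def by blast
qed

locale quaternion_like =
  fixes N :: "'a set" and E :: "'a \<Rightarrow> 'a \<Rightarrow> bool"
  assumes in_degree: "b \<in> N \<Longrightarrow> card {y\<in>N. E y b} = 3"
    and out_degree: "b \<in> N \<Longrightarrow> card {y\<in>N. E b y} = 3"
    and out_nbhd_determines: "\<lbrakk>v \<in> N; w \<in> N; \<forall>c\<in>N. E v c \<longrightarrow> E w c\<rbrakk> \<Longrightarrow> w = v"
    and out_nbhd_triangle: "v \<in> N \<Longrightarrow> \<exists>a\<in>N. \<exists>b\<in>N. \<exists>c\<in>N. E a b \<and> E b c \<and> E c a
           \<and> (\<forall>d\<in>N. E v d \<longleftrightarrow> d = a \<or> d = b \<or> d = c)"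
    and triangle_out_nbhd: "\<lbrakk>a \<in> N; b \<in> N; c \<in> N; E a b; E b c; E c a\<rbrakk>
           \<Longrightarrow> \<exists>w\<in>N. \<forall>d\<in>N. E w d \<longleftrightarrow> d = a \<or> d = b \<or> d = c"
    and unique_non_neighbour: "a \<in> N \<Longrightarrow> card {z\<in>N. z \<noteq> a \<and> \<not> E a z \<and> \<not> E z a} = 1"
    and non_neighbour_dominated:
      "\<lbrakk>a \<in> N; z \<in> N; c \<in> N; z \<noteq> a; \<not> E a z; \<not> E z a; E a c\<rbrakk> \<Longrightarrow> E c z"
    and few_paths_if_common_succ: "\<lbrakk>t \<in> N; u \<in> N; u \<noteq> t; \<not> E t u; c \<in> N; E t c; E u c\<rbrakk>
           \<Longrightarrow> card {c\<in>N. E t c \<and> E c u} \<le> 1"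
    and all_paths_if_no_common_succ: "\<lbrakk>t \<in> N; u \<in> N; u \<noteq> t; \<not> E t u;
           \<forall>c\<in>N. E t c \<longrightarrow> \<not> E u c; c \<in> N; E t c\<rbrakk> \<Longrightarrow> E c u"

lemma quaternion_like_H: "quaternion_like H_vert H_edge"
proof -
  note eval = H_edge_eq H_arcs_def H_vert_eq
  have checks: "\<forall>b\<in>H_vert. card {y\<in>H_vert. H_edge y b} = 3"
    "\<forall>b\<in>H_vert. card {y\<in>H_vert. H_edge b y} = 3"
    "\<forall>v\<in>H_vert. \<forall>w\<in>H_vert. (\<forall>c\<in>H_vert. H_edge v c \<longrightarrow> H_edge w c) \<longrightarrow> w = v"
    "\<forall>v\<in>H_vert. \<exists>a\<in>H_vert. \<exists>b\<in>H_vert. \<exists>c\<in>H_vert. H_edge a b \<and> H_edge b c \<and> H_edge c a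
      \<and> (\<forall>d\<in>H_vert. H_edge v d \<longleftrightarrow> d = a \<or> d = b \<or> d = c)"
    "\<forall>a\<in>H_vert. \<forall>b\<in>H_vert. \<forall>c\<in>H_vert. H_edge a b \<longrightarrow> H_edge b c \<longrightarrow> H_edge c a
      \<longrightarrow> (\<exists>w\<in>H_vert. \<forall>d\<in>H_vert. H_edge w d \<longleftrightarrow> d = a \<or> d = b \<or> d = c)"
    "\<forall>a\<in>H_vert. card {z\<in>H_vert. z \<noteq> a \<and> \<not> H_edge a z \<and> \<not> H_edge z a} = 1"
    "\<forall>a\<in>H_vert. \<forall>z\<in>H_vert. \<forall>c\<in>H_vert.
      z \<noteq> a \<longrightarrow> \<not> H_edge a z \<longrightarrow> \<not> H_edge z a \<longrightarrow> H_edge a c \<longrightarrow> H_edge c z"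
    "\<forall>t\<in>H_vert. \<forall>u\<in>H_vert. u \<noteq> t \<longrightarrow> \<not> H_edge t u \<longrightarrow> (\<forall>c\<in>H_vert. H_edge t c \<longrightarrow> H_edge u c
      \<longrightarrow> card {c\<in>H_vert. H_edge t c \<and> H_edge c u} \<le> 1)"
    "\<forall>t\<in>H_vert. \<forall>u\<in>H_vert. u \<noteq> t \<longrightarrow> \<not> H_edge t u \<longrightarrow> (\<forall>c\<in>H_vert. H_edge t c \<longrightarrow> \<not> H_edge u c)
      \<longrightarrow> (\<forall>c\<in>H_vert. H_edge t c \<longrightarrow> H_edge c u)"
    unfolding eval by code_simp+
  show ?thesis by unfold_locales (rule checks[rule_format (no_asm)]; assumption)+
qed

definition H_rotate :: "bool \<times> nat \<Rightarrow> bool \<times> nat" where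
  "H_rotate q = (fst q, if snd q = 0 then 0 else snd q mod 3 + 1)"

definition H_mult_j :: "bool \<times> nat \<Rightarrow> bool \<times> nat" where
  "H_mult_j q = qmul (False, 2) q"

definition H_reverse :: "bool \<times> nat \<Rightarrow> bool \<times> nat" where
  "H_reverse q = (fst q \<noteq> (snd q \<noteq> 0), if snd q = 2 then 3 else if snd q = 3 then 2 else snd q)"

lemma dg_iso_H_rotate: "dg_iso H_vert H_edge H_vert H_edge H_rotate"
  unfolding dg_iso_def bij_betw_def inj_on_def H_edge_eq H_arcs_def H_vert_eq H_rotate_def by code_simp

lemma dg_iso_H_mult_j: "dg_iso H_vert H_edge H_vert H_edge H_mult_j"
  unfolding dg_iso_def bij_betw_def inj_on_def H_edge_eq H_arcs_def H_vert_eq H_mult_j_def by code_simp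

lemma dg_iso_H_reverse: "dg_iso H_vert H_edge\<inverse>\<inverse> H_vert H_edge H_reverse"
  unfolding dg_iso_def bij_betw_def inj_on_def conversep_iff H_edge_eq H_arcs_def H_vert_eq H_reverse_def
  by code_simp

lemma H_invariant_relation_trivial:
  fixes R :: "bool \<times> nat \<Rightarrow> bool \<times> nat \<Rightarrow> bool"
  assumes refl: "\<And>a. a \<in> H_vert \<Longrightarrow> R a a"
    and no_back_edge: "\<And>a b. \<lbrakk>a \<in> H_vert; b \<in> H_vert; H_edge b a\<rbrakk> \<Longrightarrow> \<not> R a b"
    and common_succ: "\<And>a b c c' d. \<lbrakk>a \<in> H_vert; b \<in> H_vert; c \<in> H_vert; c' \<in> H_vert; d \<in> H_vert;
      a \<noteq> b; R a b; H_edge a d; H_edge b d; H_edge a c; H_edge a c'; R c b; R c' b\<rbrakk> \<Longrightarrow> c = c'"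
    and no_common_succ: "\<And>a b c. \<lbrakk>a \<in> H_vert; b \<in> H_vert; c \<in> H_vert; a \<noteq> b; R a b;
      \<forall>d\<in>H_vert. H_edge a d \<longrightarrow> \<not> H_edge b d; H_edge a c\<rbrakk> \<Longrightarrow> R c b"
    and invariant: "\<And>\<alpha> a b. \<lbrakk>dg_iso H_vert H_edge H_vert H_edge \<alpha>; a \<in> H_vert; b \<in> H_vert\<rbrakk>
      \<Longrightarrow> R (\<alpha> a) (\<alpha> b) = R a b"
    and b: "b \<in> H_vert" "R (False, 0) b"
  shows "b = (False, 0)"
proof -
  have V: "(False, 0) \<in> H_vert" "(False, 1) \<in> H_vert" "(False, 2) \<in> H_vert" "(False, 3) \<in> H_vert"
    "(True, 0) \<in> H_vert" "(True, 1) \<in> H_vert" "(True, 2) \<in> H_vert" "(True, 3) \<in> H_vert"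
    by (simp_all add: H_vert_def)
  have rotate: "R (False, 0) (False, 1) \<longleftrightarrow> R (False, 0) (False, 2)"
    "R (False, 0) (False, 2) \<longleftrightarrow> R (False, 0) (False, 3)"
    "R (False, 0) (False, 3) \<longleftrightarrow> R (False, 0) (False, 1)"
    using invariant[OF dg_iso_H_rotate V(1) V(2)] invariant[OF dg_iso_H_rotate V(1) V(3)]
      invariant[OF dg_iso_H_rotate V(1) V(4)]
    by (simp_all add: H_rotate_def)
  have mult_j: "R (False, 0) (False, 3) \<longleftrightarrow> R (False, 2) (False, 1)"
    using invariant[OF dg_iso_H_mult_j V(1) V(4)] by (simp add: H_mult_j_def)
  note edges = H_edge_eq H_arcs_def
  \<comment> \<open>Write 1, i, j, k, -1 for (False, 0), ..., (False, 3), (True, 0). By the rotation i -> j -> k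
    and left multiplication by j, R 1 i yields R j i: two successors i, j of 1 related to i, although
    1 and i have the common successor k.\<close>
  have no_R_i: "\<not> R (False, 0) (False, 1)"
  proof
    assume "R (False, 0) (False, 1)"
    then have "R (False, 2) (False, 1)" using rotate mult_j by blast
    then show False
      using common_succ[of "(False, 0)" "(False, 1)" "(False, 1)" "(False, 2)" "(False, 3)"]
        \<open>R (False, 0) (False, 1)\<close> refl V by (simp add: edges)
  qed
  \<comment> \<open>1 and -1 have no common successor, so R 1 -1 yields R i -1 and R k -1: two successors -1, k
    of i related to -1, although i and -1 have the common successor -j.\<close>
  have no_R_minus_1: "\<not> R (False, 0) (True, 0)"
  proof
    assume R: "R (False, 0) (True, 0)"
    have "\<forall>d\<in>H_vert. H_edge (False, 0) d \<longrightarrow> \<not> H_edge (True, 0) d"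
      unfolding edges H_vert_eq by code_simp
    then have "R (False, 1) (True, 0)" "R (False, 3) (True, 0)"
      using no_common_succ[of "(False, 0)" "(True, 0)"] R V by (simp_all add: edges)
    then show False
      using common_succ[of "(False, 1)" "(True, 0)" "(True, 0)" "(False, 3)" "(True, 2)"] refl V
      by (simp add: edges)
  qed
  have "b \<in> set [(False,0), (False,1), (False,2), (False,3), (True,0), (True,1), (True,2), (True,3)]"
    using b(1) by (simp add: H_vert_eq)
  then show ?thesis
    using b(2) no_R_i no_R_minus_1 rotate no_back_edge[OF V(1)] V by (auto simp: edges)
qed

section \<open>Isomorphisms and automorphisms of digraphs\<close>

lemma dg_iso_comp: "dg_iso A E1 B E2 f \<Longrightarrow> dg_iso B E2 C E3 h \<Longrightarrow> dg_iso A E1 C E3 (h \<circ> f)"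
  unfolding dg_iso_def by (auto simp: bij_betw_trans bij_betw_apply)

lemma dg_iso_inv: "dg_iso A E1 B E2 f \<Longrightarrow> dg_iso B E2 A E1 (inv_into A f)"
  unfolding dg_iso_def
proof (elim conjE, intro conjI ballI)
  assume bij: "bij_betw f A B" and edges: "\<forall>x\<in>A. \<forall>y\<in>A. E1 x y = E2 (f x) (f y)"
  show "bij_betw (inv_into A f) B A" using bij by (rule bij_betw_inv_into)
  fix x y assume "x \<in> B" "y \<in> B"
  moreover have "\<And>z. z \<in> B \<Longrightarrow> inv_into A f z \<in> A \<and> f (inv_into A f z) = z"
    using bij by (meson bij_betw_apply bij_betw_inv_into bij_betw_inv_into_right)
  ultimately show "E2 x y = E1 (inv_into A f x) (inv_into A f y)" using edges by metis
qed

lemma dg_iso_card: "dg_iso A E1 B E2 f \<Longrightarrow> card A = card B"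
  unfolding dg_iso_def using bij_betw_same_card by blast

lemma dg_iso_conversep: "dg_iso A E1\<inverse>\<inverse> B E2\<inverse>\<inverse> f = dg_iso A E1 B E2 f"
  unfolding dg_iso_def by auto

lemma quaternion_like_dg_iso:
  assumes "quaternion_like M F" and "dg_iso M F N E f"
  shows "quaternion_like N E"
proof -
  interpret quaternion_like M F by fact
  have inj: "inj_on f M" and N: "N = f ` M"
    and F: "\<And>x y. x \<in> M \<Longrightarrow> y \<in> M \<Longrightarrow> E (f x) (f y) = F x y"
    using assms(2) unfolding dg_iso_def bij_betw_def by auto
  have eq: "\<And>x y. x \<in> M \<Longrightarrow> y \<in> M \<Longrightarrow> f x = f y \<longleftrightarrow> x = y" using inj by (meson inj_onD)
  have card: "\<And>P. card {y \<in> N. P y} = card {x \<in> M. P (f x)}"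
    unfolding N Compr_image_eq by (rule card_image) (rule inj_on_subset[OF inj], auto)
  have pre: "\<And>b. b \<in> N \<Longrightarrow> \<exists>x\<in>M. b = f x" unfolding N by blast
  have ball: "\<And>P. (\<forall>y\<in>N. P y) \<longleftrightarrow> (\<forall>x\<in>M. P (f x))"
    and bex: "\<And>P. (\<exists>y\<in>N. P y) \<longleftrightarrow> (\<exists>x\<in>M. P (f x))" unfolding N by blast+
  note simps = card F eq ball bex
  show ?thesis
  proof
    fix b assume "b \<in> N"
    then obtain x where "x \<in> M" "b = f x" using pre by blast
    then show "card {y\<in>N. E y b} = 3" using in_degree[of x] by (simp add: simps cong: conj_cong)
  next
    fix b assume "b \<in> N"
    then obtain x where "x \<in> M" "b = f x" using pre by blast
    then show "card {y\<in>N. E b y} = 3" using out_degree[of x] by (simp add: simps cong: conj_cong)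
  next
    fix v w assume vw: "v \<in> N" "w \<in> N" "\<forall>c\<in>N. E v c \<longrightarrow> E w c"
    obtain x y where "x \<in> M" "y \<in> M" "v = f x" "w = f y" using pre vw(1,2) by metis
    then show "w = v" using out_nbhd_determines[of x y] vw(3) by (simp add: simps)
  next
    fix v assume "v \<in> N"
    then obtain x where "x \<in> M" "v = f x" using pre by blast
    then show "\<exists>a\<in>N. \<exists>b\<in>N. \<exists>c\<in>N. E a b \<and> E b c \<and> E c a \<and> (\<forall>d\<in>N. E v d \<longleftrightarrow> d = a \<or> d = b \<or> d = c)"
      using out_nbhd_triangle[of x] by (simp add: simps)
  next
    fix a b c assume abc: "a \<in> N" "b \<in> N" "c \<in> N" "E a b" "E b c" "E c a"
    obtain x y z where "x \<in> M" "y \<in> M" "z \<in> M" "a = f x" "b = f y" "c = f z"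
      using pre abc(1-3) by metis
    then show "\<exists>w\<in>N. \<forall>d\<in>N. E w d \<longleftrightarrow> d = a \<or> d = b \<or> d = c"
      using triangle_out_nbhd[of x y z] abc(4-6) by (simp add: simps)
  next
    fix a assume "a \<in> N"
    then obtain x where "x \<in> M" "a = f x" using pre by blast
    then show "card {z\<in>N. z \<noteq> a \<and> \<not> E a z \<and> \<not> E z a} = 1"
      using unique_non_neighbour[of x] by (simp add: simps cong: conj_cong)
  next
    fix a z c assume azc: "a \<in> N" "z \<in> N" "c \<in> N" "z \<noteq> a" "\<not> E a z" "\<not> E z a" "E a c"
    obtain x y w where "x \<in> M" "y \<in> M" "w \<in> M" "a = f x" "z = f y" "c = f w"
      using pre azc(1-3) by metis
    then show "E c z" using non_neighbour_dominated[of x y w] azc(4-7) by (simp add: simps)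
  next
    fix t u c assume tuc: "t \<in> N" "u \<in> N" "u \<noteq> t" "\<not> E t u" "c \<in> N" "E t c" "E u c"
    obtain x y z where "x \<in> M" "y \<in> M" "z \<in> M" "t = f x" "u = f y" "c = f z"
      using pre tuc(1,2,5) by metis
    then show "card {c\<in>N. E t c \<and> E c u} \<le> 1"
      using few_paths_if_common_succ[of x y z] tuc(3-7) by (simp add: simps cong: conj_cong)
  next
    fix t u c
    assume tuc: "t \<in> N" "u \<in> N" "u \<noteq> t" "\<not> E t u" "\<forall>c\<in>N. E t c \<longrightarrow> \<not> E u c" "c \<in> N" "E t c"
    obtain x y z where "x \<in> M" "y \<in> M" "z \<in> M" "t = f x" "u = f y" "c = f z"
      using pre tuc(1,2,6) by metis
    then show "E c u" using all_paths_if_no_common_succ[of x y z] tuc(3-5,7) by (simp add: simps)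
  qed
qed

lemma dg_iso_insert_apex:
  assumes iso: "dg_iso N E N E h" and "x \<notin> N" and apex: "\<forall>y\<in>N. E x y \<and> \<not> E y x" and "\<not> E x x"
  shows "dg_iso (insert x N) E (insert x N) E (\<lambda>y. if y = x then x else h y)"
proof -
  have bij: "bij_betw h N N" and edges: "\<forall>a\<in>N. \<forall>b\<in>N. E a b = E (h a) (h b)"
    using iso unfolding dg_iso_def by auto
  have "h ` N = N" "inj_on h N" using bij unfolding bij_betw_def by auto
  then have "bij_betw (\<lambda>y. if y = x then x else h y) (insert x N) (insert x N)"
    unfolding bij_betw_def inj_on_def using \<open>x \<notin> N\<close> by (auto simp: image_iff)
  moreover have "h y \<in> N" if "y \<in> N" for y using bij that by (simp add: bij_betw_apply)
  ultimately show ?thesis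
    unfolding dg_iso_def using edges apex \<open>x \<notin> N\<close> \<open>\<not> E x x\<close> by auto
qed

lemma connected_on_if_centre:
  assumes "c \<in> A" and centre: "\<forall>y\<in>A. y = c \<or> E c y \<or> E y c"
  shows "connected_on E A"
  unfolding connected_on_def
proof (intro ballI)
  let ?R = "\<lambda>u v. u \<in> A \<and> v \<in> A \<and> (E u v \<or> E v u)"
  have to_c: "?R\<^sup>*\<^sup>* y c" and from_c: "?R\<^sup>*\<^sup>* c y" if "y \<in> A" for y
    using centre that \<open>c \<in> A\<close> by (metis (mono_tags, lifting) r_into_rtranclp rtranclp.rtrancl_refl)+
  fix x y assume "x \<in> A" "y \<in> A"
  then show "?R\<^sup>*\<^sup>* x y" using to_c from_c by (meson rtranclp_trans)
qed

lemma distinct_length_le_card: "finite Q \<Longrightarrow> set xs \<subseteq> Q \<Longrightarrow> distinct xs \<Longrightarrow> length xs \<le> card Q"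
  using card_mono[of Q "set xs"] distinct_card[of xs] by simp

lemma sum_card_succ_eq_sum_card_pred:
  assumes "finite S"
  shows "(\<Sum>u\<in>S. card {y\<in>S. R u y}) = (\<Sum>u\<in>S. card {y\<in>S. R y u})"
proof -
  have "(\<Sum>u\<in>S. card {y\<in>S. R u y}) = card (SIGMA u:S. {y\<in>S. R u y})"
    using assms by (simp add: card_SigmaI)
  also have "(SIGMA u:S. {y\<in>S. R u y}) = prod.swap ` (SIGMA u:S. {y\<in>S. R y u})"
    by (auto simp: image_iff)
  also have "card \<dots> = card (SIGMA u:S. {y\<in>S. R y u})"
    by (rule card_image) (simp add: inj_on_def)
  also have "\<dots> = (\<Sum>u\<in>S. card {y\<in>S. R y u})"
    using assms by (simp add: card_SigmaI)
  finally show ?thesis .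
qed

lemma automorphism_edge_iff:
  "automorphism V E g \<Longrightarrow> a \<in> V \<Longrightarrow> b \<in> V \<Longrightarrow> E (g a) (g b) \<longleftrightarrow> E a b"
  unfolding automorphism_def dg_iso_def by simp

lemma automorphism_image: "automorphism V E g \<Longrightarrow> g ` V = V"
  unfolding automorphism_def dg_iso_def bij_betw_def by blast

lemma automorphism_inj: "automorphism V E g \<Longrightarrow> inj_on g V"
  unfolding automorphism_def dg_iso_def bij_betw_def by blast

lemma automorphism_image_Collect:
  assumes g: "automorphism V E g" and "\<And>y. y \<in> V \<Longrightarrow> Q (g y) \<longleftrightarrow> P y"
  shows "g ` {y\<in>V. P y} = {y\<in>V. Q y}"
  using automorphism_image[OF g] assms(2) by force

lemma automorphism_dg_iso_out_nbhd:
  assumes g: "automorphism V E g" and "y \<in> V"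
  shows "dg_iso (out_nbhd V E y) E (out_nbhd V E (g y)) E g"
proof -
  have "g ` out_nbhd V E y = out_nbhd V E (g y)"
    unfolding out_nbhd_def using automorphism_edge_iff[OF g \<open>y \<in> V\<close>]
    by (intro automorphism_image_Collect[OF g]) simp
  moreover have "inj_on g (out_nbhd V E y)"
    by (rule inj_on_subset[OF automorphism_inj[OF g]]) (auto simp: out_nbhd_def)
  ultimately show ?thesis
    unfolding dg_iso_def bij_betw_def using automorphism_edge_iff[OF g] by (auto simp: out_nbhd_def)
qed

lemma automorphism_card_common_pred:
  assumes g: "automorphism V E g" and "a \<in> V" "b \<in> V"
  shows "card {y\<in>V. E y (g a) \<and> E y (g b)} = card {y\<in>V. E y a \<and> E y b}"
proof -
  have image: "g ` {y\<in>V. E y a \<and> E y b} = {y\<in>V. E y (g a) \<and> E y (g b)}"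
    using automorphism_edge_iff[OF g] assms(2,3) by (intro automorphism_image_Collect[OF g]) simp
  have "inj_on g {y\<in>V. E y a \<and> E y b}"
    by (rule inj_on_subset[OF automorphism_inj[OF g]]) auto
  then show ?thesis using card_image image by fastforce
qed

section \<open>C-homogeneous digraphs\<close>

locale C_homogeneous_digraph =
  fixes V :: "'a set" and E :: "'a \<Rightarrow> 'a \<Rightarrow> bool"
  assumes digraph: "digraph V E" and locally_finite: "locally_finite V E"
    and C_homogeneous: "C_homogeneous V E"
begin

lemma edge_in_V: "E a b \<Longrightarrow> a \<in> V \<and> b \<in> V"
  using digraph unfolding digraph_def by blast

lemma no_loop: "\<not> E a a"
  using digraph unfolding digraph_def by blast

lemma edge_asym: "E a b \<Longrightarrow> \<not> E b a"
  using digraph unfolding digraph_def by blast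

lemma mem_out_nbhd [simp]: "z \<in> out_nbhd V E y \<longleftrightarrow> E y z"
  unfolding out_nbhd_def using edge_in_V by blast

lemma extend_iso:
  assumes "A \<subseteq> V" "B \<subseteq> V" "finite A" "finite B" "connected_on E A" "connected_on E B"
    and "dg_iso A E B E f"
  shows "\<exists>g. automorphism V E g \<and> (\<forall>x\<in>A. g x = f x)"
  using C_homogeneous assms unfolding C_homogeneous_def by blast

lemma vertex_transitive:
  assumes "x \<in> V" "y \<in> V"
  obtains g where "automorphism V E g" "g x = y"
proof -
  have "dg_iso {x} E {y} E (\<lambda>_. y)"
    unfolding dg_iso_def using no_loop by (simp add: bij_betw_def)
  moreover have "connected_on E {x}" "connected_on E {y}"
    by (auto intro: connected_on_if_centre)
  ultimately have "\<exists>g. automorphism V E g \<and> (\<forall>z\<in>{x}. g z = y)"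
    using assms by (intro extend_iso) auto
  then show ?thesis using that by auto
qed

lemma arc_transitive:
  assumes "E a b" "E c d"
  obtains g where "automorphism V E g" "g a = c" "g b = d"
proof -
  let ?f = "\<lambda>z. if z = a then c else d"
  have "a \<noteq> b" "c \<noteq> d" using assms no_loop by metis+
  then have "dg_iso {a, b} E {c, d} E ?f"
    unfolding dg_iso_def bij_betw_def inj_on_def using assms no_loop edge_asym by auto
  moreover have "connected_on E {a, b}" "connected_on E {c, d}"
    using assms by (auto intro: connected_on_if_centre)
  ultimately have "\<exists>g. automorphism V E g \<and> (\<forall>x\<in>{a, b}. g x = ?f x)"
    using assms edge_in_V by (intro extend_iso) auto
  then show ?thesis using that \<open>a \<noteq> b\<close> by auto
qed

lemma card_common_pred_arc_invariant:
  assumes "E a b" "E c d"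
  shows "card {y\<in>V. E y a \<and> E y b} = card {y\<in>V. E y c \<and> E y d}"
proof -
  obtain g where g: "automorphism V E g" "g a = c" "g b = d" using arc_transitive assms .
  have "card {y\<in>V. E y (g a) \<and> E y (g b)} = card {y\<in>V. E y a \<and> E y b}"
    using automorphism_card_common_pred[OF g(1)] edge_in_V[OF assms(1)] by blast
  then show ?thesis using g by simp
qed

lemma card_common_pred_eq_in_degree:
  assumes in_degree: "\<And>u b. E u b \<Longrightarrow> card {y\<in>out_nbhd V E u. E y b} = d" and "E a b"
  shows "card {y\<in>V. E y a \<and> E y b} = d"
proof -
  \<comment> \<open>Count the arcs inside N-(b): every vertex of N-(b) has d successors there and, by
    arc-transitivity, as many predecessors as a has.\<close>
  let ?S = "{y\<in>V. E y b}"
  let ?k = "card {y\<in>V. E y a \<and> E y b}"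
  have "finite ?S"
    using locally_finite edge_in_V[OF \<open>E a b\<close>] unfolding locally_finite_def
    by (rule_tac finite_subset[of _ "{y\<in>V. E b y \<or> E y b}"]) auto
  have succ: "card {y\<in>?S. E u y} = d" if "u \<in> ?S" for u
  proof -
    have "{y\<in>?S. E u y} = {y\<in>out_nbhd V E u. E y b}" by (auto dest: edge_in_V)
    then show ?thesis using in_degree that by simp
  qed
  have pred: "card {y\<in>?S. E y u} = ?k" if "u \<in> ?S" for u
  proof -
    have "{y\<in>?S. E y u} = {y\<in>V. E y u \<and> E y b}" by auto
    then show ?thesis using card_common_pred_arc_invariant[of u b a b] that \<open>E a b\<close> by simp
  qed
  have "card ?S * d = card ?S * ?k"
    using sum_card_succ_eq_sum_card_pred[OF \<open>finite ?S\<close>, of E] succ pred by simp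
  moreover have "card ?S \<noteq> 0" using \<open>finite ?S\<close> \<open>E a b\<close> edge_in_V by auto
  ultimately show ?thesis by simp
qed

end

section \<open>A C-homogeneous digraph with an out-neighbourhood isomorphic to H\<close>

locale out_nbhd_H = C_homogeneous_digraph +
  fixes x0 :: 'a and \<phi>0 :: "'a \<Rightarrow> bool \<times> nat"
  assumes x0_in_V: "x0 \<in> V"
    and dg_iso_out_nbhd_x0: "dg_iso (out_nbhd V E x0) E H_vert H_edge \<phi>0"
begin

lemma dg_iso_H_out_nbhd:
  assumes "y \<in> V"
  obtains \<psi> where "dg_iso H_vert H_edge (out_nbhd V E y) E \<psi>"
proof -
  obtain g where g: "automorphism V E g" "g x0 = y" using vertex_transitive[OF x0_in_V assms] .
  have "dg_iso H_vert H_edge (out_nbhd V E y) E (g \<circ> inv_into (out_nbhd V E x0) \<phi>0)"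
    using dg_iso_comp[OF dg_iso_inv[OF dg_iso_out_nbhd_x0] automorphism_dg_iso_out_nbhd[OF g(1) x0_in_V]]
    unfolding g(2) .
  then show ?thesis using that by blast
qed

lemma quaternion_like_out_nbhd: "y \<in> V \<Longrightarrow> quaternion_like (out_nbhd V E y) E"
  using dg_iso_H_out_nbhd quaternion_like_dg_iso[OF quaternion_like_H] by metis

lemma finite_out_nbhd: "y \<in> V \<Longrightarrow> finite (out_nbhd V E y)"
  using dg_iso_H_out_nbhd dg_iso_card card_H_vert by (metis card.infinite zero_neq_numeral)

lemma card_out_nbhd: "y \<in> V \<Longrightarrow> card (out_nbhd V E y) = 8"
  using dg_iso_H_out_nbhd dg_iso_card card_H_vert by metis

lemma card_common_pred: "E a b \<Longrightarrow> card {y\<in>V. E y a \<and> E y b} = 3"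
proof (rule card_common_pred_eq_in_degree)
  fix u b assume "E u b"
  then show "card {y\<in>out_nbhd V E u. E y b} = 3"
    using quaternion_like.in_degree[OF quaternion_like_out_nbhd] edge_in_V by simp
qed

lemma no_four_common_pred:
  assumes "E a b" and "\<forall>y\<in>{p, q, r, s}. E y a \<and> E y b" and "distinct [p, q, r, s]"
  shows False
proof -
  have "finite {y\<in>V. E y a \<and> E y b}" using card_common_pred[OF assms(1)] by (simp add: card_ge_0_finite)
  moreover have "set [p, q, r, s] \<subseteq> {y\<in>V. E y a \<and> E y b}" using assms(2) edge_in_V by auto
  ultimately have "length [p, q, r, s] \<le> 3"
    using distinct_length_le_card assms(3) card_common_pred[OF assms(1)] by metis
  then show False by simp
qed

definition is_mate :: "'a \<Rightarrow> 'a \<Rightarrow> bool" where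
  "is_mate v s \<longleftrightarrow> E v s \<and> E s x0 \<and> (\<forall>d. E x0 d \<longrightarrow> (E s d \<longleftrightarrow> E v d))
    \<and> (\<forall>d. E v d \<longrightarrow> (E s d \<longleftrightarrow> E x0 d))"

lemma mate_exists:
  assumes "E x0 v"
  shows "\<exists>s. is_mate v s"
proof -
  \<comment> \<open>The triangle N+(x0) \<inter> N+(v) is the out-neighbourhood of some s within N+(v), and again of
    some s' within N+(s); then s' = x0, as the arc a -> b has only three common predecessors.\<close>
  interpret Nx: quaternion_like "out_nbhd V E x0" E using quaternion_like_out_nbhd[OF x0_in_V] .
  interpret Nv: quaternion_like "out_nbhd V E v" E using quaternion_like_out_nbhd edge_in_V assms by blast
  obtain a b c where abc: "E x0 a" "E x0 b" "E x0 c" "E a b" "E b c" "E c a"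
    and v_abc: "\<And>d. E x0 d \<Longrightarrow> E v d \<longleftrightarrow> d = a \<or> d = b \<or> d = c"
    using Nx.out_nbhd_triangle[of v] assms by auto
  then obtain s where "E v s" and s_abc: "\<And>d. E v d \<Longrightarrow> E s d \<longleftrightarrow> d = a \<or> d = b \<or> d = c"
    using Nv.triangle_out_nbhd[of a b c] by auto
  interpret Ns: quaternion_like "out_nbhd V E s" E using quaternion_like_out_nbhd edge_in_V \<open>E v s\<close> by blast
  have "E s a" "E s b" "E s c" using s_abc v_abc abc by auto
  then obtain s' where "E s s'" and s'_abc: "\<And>d. E s d \<Longrightarrow> E s' d \<longleftrightarrow> d = a \<or> d = b \<or> d = c"
    using Ns.triangle_out_nbhd[of a b c] abc by auto
  have "s' = x0"
  proof (rule ccontr)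
    assume "s' \<noteq> x0"
    moreover have "E v a" "E v b" using v_abc abc by auto
    moreover have "E s' a" "E s' b" using s'_abc \<open>E s a\<close> \<open>E s b\<close> by auto
    ultimately show False
      using no_four_common_pred[OF \<open>E a b\<close>, of x0 v s s'] abc \<open>E s a\<close> \<open>E s b\<close> assms \<open>E v s\<close> \<open>E s s'\<close>
        no_loop edge_asym by auto
  qed
  then have "E s x0" using \<open>E s s'\<close> by simp
  then have "is_mate v s"
    unfolding is_mate_def using \<open>E v s\<close> s_abc s'_abc \<open>s' = x0\<close> v_abc abc by auto
  then show ?thesis ..
qed

definition mate :: "'a \<Rightarrow> 'a" where
  "mate v = (SOME s. is_mate v s)"

lemma is_mate_mate: "E x0 v \<Longrightarrow> is_mate v (mate v)"
  unfolding mate_def by (rule someI_ex[OF mate_exists])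

lemma mate_succ: "E x0 v \<Longrightarrow> E v (mate v)"
  using is_mate_mate unfolding is_mate_def by blast

lemma mate_pred: "E x0 v \<Longrightarrow> E (mate v) x0"
  using is_mate_mate unfolding is_mate_def by blast

lemma mate_succ_iff_succ: "E x0 v \<Longrightarrow> E x0 d \<Longrightarrow> E (mate v) d \<longleftrightarrow> E v d"
  using is_mate_mate unfolding is_mate_def by blast

lemma mate_succ_iff_x0_succ: "E x0 v \<Longrightarrow> E v d \<Longrightarrow> E (mate v) d \<longleftrightarrow> E x0 d"
  using is_mate_mate unfolding is_mate_def by blast

lemma mate_unique:
  assumes "E x0 v" "E u x0" and dominates: "\<forall>d. E v d \<and> E x0 d \<longrightarrow> E u d"
  shows "u = mate v"
proof (rule ccontr)
  assume "u \<noteq> mate v"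
  interpret Nx: quaternion_like "out_nbhd V E x0" E using quaternion_like_out_nbhd[OF x0_in_V] .
  obtain a b c where abc: "E x0 a" "E x0 b" "E a b"
    and v_abc: "\<And>d. E x0 d \<Longrightarrow> E v d \<longleftrightarrow> d = a \<or> d = b \<or> d = c"
    using Nx.out_nbhd_triangle[of v] assms(1) by auto
  have "E v a" "E v b" using v_abc abc by auto
  then have "\<forall>y\<in>{x0, v, u, mate v}. E y a \<and> E y b"
    using abc dominates mate_succ_iff_succ[OF assms(1)] by auto
  moreover have "distinct [x0, v, u, mate v]"
    using \<open>u \<noteq> mate v\<close> assms(1,2) mate_succ[OF assms(1)] mate_pred[OF assms(1)] no_loop edge_asym
    by auto
  ultimately show False using no_four_common_pred[OF \<open>E a b\<close>] by blast
qed

lemma pred_is_mate: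
  assumes "E u x0"
  obtains w where "E x0 w" "u = mate w"
proof -
  interpret Nx: quaternion_like "out_nbhd V E x0" E using quaternion_like_out_nbhd[OF x0_in_V] .
  interpret Nu: quaternion_like "out_nbhd V E u" E using quaternion_like_out_nbhd edge_in_V assms by blast
  obtain a b c where abc: "E u a" "E u b" "E u c" "E a b" "E b c" "E c a"
    and x0_abc: "\<And>d. E u d \<Longrightarrow> E x0 d \<longleftrightarrow> d = a \<or> d = b \<or> d = c"
    using Nu.out_nbhd_triangle[of x0] assms by auto
  then obtain w where "E x0 w" and w_abc: "\<And>d. E x0 d \<Longrightarrow> E w d \<longleftrightarrow> d = a \<or> d = b \<or> d = c"
    using Nx.triangle_out_nbhd[of a b c] x0_abc by auto
  have "\<forall>d. E w d \<and> E x0 d \<longrightarrow> E u d" using w_abc abc by auto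
  then show ?thesis using mate_unique[OF \<open>E x0 w\<close> assms] that \<open>E x0 w\<close> by blast
qed

lemma non_adjacent_succ_common_pred:
  assumes "E x0 v" "E v z" "\<not> E x0 z" "\<not> E z x0"
  shows "\<exists>r. E r x0 \<and> E r v \<and> E r z"
proof -
  \<comment> \<open>An automorphism maps a path v -> c -> y inside N+(x0) with v, y non-adjacent onto
    x0 -> v -> z; the image of x0 is the required r.\<close>
  interpret Nx: quaternion_like "out_nbhd V E x0" E using quaternion_like_out_nbhd[OF x0_in_V] .
  have "card {c\<in>out_nbhd V E x0. E v c} = 3" using Nx.out_degree assms(1) by simp
  then have "{c\<in>out_nbhd V E x0. E v c} \<noteq> {}" by (metis card.empty zero_neq_numeral)
  then obtain c where c: "E x0 c" "E v c" by (auto simp del: mem_out_nbhd simp: out_nbhd_def)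
  have "card {y\<in>out_nbhd V E x0. y \<noteq> v \<and> \<not> E v y \<and> \<not> E y v} = 1"
    using Nx.unique_non_neighbour assms(1) by simp
  then obtain y where "{y'\<in>out_nbhd V E x0. y' \<noteq> v \<and> \<not> E v y' \<and> \<not> E y' v} = {y}"
    by (rule card_1_singletonE)
  then have y: "E x0 y" "y \<noteq> v" "\<not> E v y" "\<not> E y v" by auto
  have "E c y" using Nx.non_neighbour_dominated[of v y c] assms(1) y c by simp
  define f where "f w = (if w = v then x0 else if w = c then v else z)" for w
  have distinct: "v \<noteq> c" "c \<noteq> y" "v \<noteq> y" "x0 \<noteq> v" "v \<noteq> z" "x0 \<noteq> z"
    using assms c \<open>E c y\<close> y no_loop edge_asym by metis+
  then have f: "f v = x0" "f c = v" "f y = z" unfolding f_def by auto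
  have "bij_betw f {v, c, y} {x0, v, z}" unfolding bij_betw_def using distinct by (auto simp: f)
  moreover have "\<forall>p\<in>{v, c, y}. \<forall>q\<in>{v, c, y}. E p q \<longleftrightarrow> E (f p) (f q)"
  proof -
    have "\<not> E c v" "\<not> E y c" "\<not> E v x0" "\<not> E z v"
      using c(2) \<open>E c y\<close> assms(1,2) edge_asym by blast+
    then show ?thesis using assms c y \<open>E c y\<close> by (simp add: f no_loop)
  qed
  ultimately have "dg_iso {v, c, y} E {x0, v, z} E f" unfolding dg_iso_def ..
  moreover have "connected_on E {v, c, y}"
    by (rule connected_on_if_centre[of c]) (use c \<open>E c y\<close> in auto)
  moreover have "connected_on E {x0, v, z}"
    by (rule connected_on_if_centre[of v]) (use assms in auto)
  moreover have "{v, c, y} \<subseteq> V" "{x0, v, z} \<subseteq> V" using assms c y edge_in_V by auto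
  ultimately obtain g where g: "automorphism V E g" "\<forall>w\<in>{v, c, y}. g w = f w"
    using extend_iso[of "{v, c, y}" "{x0, v, z}" f] by auto
  have "E (g x0) (g v)" "E (g x0) (g c)" "E (g x0) (g y)"
    using automorphism_edge_iff[OF g(1)] assms(1) c y edge_in_V by blast+
  then show ?thesis using g(2) f by auto
qed

lemma card_non_adjacent_succ_le_3:
  assumes "E x0 v"
  shows "card {z\<in>out_nbhd V E v. \<not> E x0 z \<and> \<not> E z x0} \<le> 3"
proof -
  let ?Z = "{z\<in>out_nbhd V E v. \<not> E x0 z \<and> \<not> E z x0}"
  let ?P = "{r\<in>V. E r x0 \<and> E r v}"
  have "\<forall>z\<in>?Z. \<exists>r. r \<in> ?P \<and> E r z"
  proof
    fix z assume "z \<in> ?Z"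
    then obtain r where "E r x0" "E r v" "E r z" using non_adjacent_succ_common_pred[OF assms] by auto
    then show "\<exists>r. r \<in> ?P \<and> E r z" using edge_in_V by blast
  qed
  then obtain r where r_all: "\<forall>z\<in>?Z. r z \<in> ?P \<and> E (r z) z" by (rule bchoice[THEN exE])
  then have r: "\<And>z. z \<in> ?Z \<Longrightarrow> r z \<in> ?P \<and> E (r z) z" by (rule bspec)
  \<comment> \<open>z is the unique non-neighbour of x0 in the out-neighbourhood of r z, so r is injective.\<close>
  have "inj_on r ?Z"
  proof (rule inj_onI)
    fix z z' assume z: "z \<in> ?Z" and z': "z' \<in> ?Z" and "r z = r z'"
    let ?u = "r z"
    interpret Nu: quaternion_like "out_nbhd V E ?u" E using quaternion_like_out_nbhd r[OF z] by blast
    have "z \<noteq> x0" "z' \<noteq> x0" using z z' assms edge_asym by auto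
    let ?S = "{w\<in>out_nbhd V E ?u. w \<noteq> x0 \<and> \<not> E x0 w \<and> \<not> E w x0}"
    have "z \<in> ?S" "z' \<in> ?S" using r[OF z] r[OF z'] z z' \<open>z \<noteq> x0\<close> \<open>z' \<noteq> x0\<close> \<open>r z = r z'\<close> by auto
    moreover have "card ?S = 1" using Nu.unique_non_neighbour r[OF z] by simp
    then obtain w where "?S = {w}" by (rule card_1_singletonE)
    ultimately show "z = z'" by (metis singletonD)
  qed
  moreover have "r ` ?Z \<subseteq> ?P" using r by blast
  moreover have "finite ?P" using card_common_pred[OF assms] by (simp add: card_ge_0_finite)
  ultimately have "card ?Z \<le> card ?P" by (meson card_inj_on_le)
  then show ?thesis using card_common_pred[OF assms] by simp
qed

lemma exists_pred_succ_ne_mate: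
  assumes "E x0 v"
  shows "\<exists>u. E v u \<and> E u x0 \<and> u \<noteq> mate v"
proof (rule ccontr)
  assume "\<nexists>u. E v u \<and> E u x0 \<and> u \<noteq> mate v"
  then have "{u\<in>out_nbhd V E v. E u x0} \<subseteq> {mate v}" by auto
  then have "card {u\<in>out_nbhd V E v. E u x0} \<le> card {mate v}" by (rule card_mono[rotated]) simp
  then have pred: "card {u\<in>out_nbhd V E v. E u x0} \<le> 1" by simp
  interpret Nx: quaternion_like "out_nbhd V E x0" E using quaternion_like_out_nbhd[OF x0_in_V] .
  have "{u\<in>out_nbhd V E v. E x0 u} = {u\<in>out_nbhd V E x0. E v u}" by auto
  then have succ: "card {u\<in>out_nbhd V E v. E x0 u} = 3" using Nx.out_degree assms by simp
  let ?Ov = "out_nbhd V E v"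
  let ?A = "{u\<in>?Ov. E x0 u}" and ?B = "{u\<in>?Ov. E u x0}" and ?C = "{u\<in>?Ov. \<not> E x0 u \<and> \<not> E u x0}"
  have "card ?Ov = card (?A \<union> ?B \<union> ?C)" by (rule arg_cong[where f = card]) blast
  also have "\<dots> \<le> card (?A \<union> ?B) + card ?C" by (rule card_Un_le)
  also have "\<dots> \<le> card ?A + card ?B + card ?C" using card_Un_le[of ?A ?B] by simp
  finally show False
    using card_out_nbhd[of v] edge_in_V[OF assms] succ pred card_non_adjacent_succ_le_3[OF assms] by simp
qed

definition lift :: "bool \<times> nat \<Rightarrow> 'a" where
  "lift h = inv_into (out_nbhd V E x0) \<phi>0 h"

lemma x0_succ_lift: "h \<in> H_vert \<Longrightarrow> E x0 (lift h)"
  unfolding lift_def using dg_iso_out_nbhd_x0 unfolding dg_iso_def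
  by (metis bij_betw_imp_surj_on inv_into_into mem_out_nbhd)

lemma \<phi>0_lift: "h \<in> H_vert \<Longrightarrow> \<phi>0 (lift h) = h"
  unfolding lift_def using dg_iso_out_nbhd_x0 unfolding dg_iso_def by (meson bij_betw_inv_into_right)

lemma lift_\<phi>0: "E x0 y \<Longrightarrow> lift (\<phi>0 y) = y"
  unfolding lift_def using dg_iso_out_nbhd_x0 unfolding dg_iso_def
  by (meson bij_betw_inv_into_left mem_out_nbhd)

lemma \<phi>0_in_H_vert: "E x0 y \<Longrightarrow> \<phi>0 y \<in> H_vert"
  using dg_iso_out_nbhd_x0 unfolding dg_iso_def by (meson bij_betw_apply mem_out_nbhd)

lemma edge_lift_iff: "a \<in> H_vert \<Longrightarrow> b \<in> H_vert \<Longrightarrow> E (lift a) (lift b) \<longleftrightarrow> H_edge a b"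
  using dg_iso_out_nbhd_x0 x0_succ_lift \<phi>0_lift unfolding dg_iso_def by (metis mem_out_nbhd)

lemma lift_inj: "a \<in> H_vert \<Longrightarrow> b \<in> H_vert \<Longrightarrow> lift a = lift b \<Longrightarrow> a = b"
  by (metis \<phi>0_lift)

definition mate_rel :: "bool \<times> nat \<Rightarrow> bool \<times> nat \<Rightarrow> bool" where
  "mate_rel a b \<longleftrightarrow> E (lift a) (mate (lift b))"

lemma mate_rel_refl: "a \<in> H_vert \<Longrightarrow> mate_rel a a"
  unfolding mate_rel_def using mate_succ x0_succ_lift by blast

lemma mate_rel_no_back_edge: "a \<in> H_vert \<Longrightarrow> b \<in> H_vert \<Longrightarrow> H_edge b a \<Longrightarrow> \<not> mate_rel a b"
  unfolding mate_rel_def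
  using edge_lift_iff mate_succ_iff_succ x0_succ_lift edge_asym by blast

lemma mates_non_adjacent:
  assumes "E x0 v" "E x0 w" "v \<noteq> w" "E v (mate w)"
  shows "mate w \<noteq> mate v" "\<not> E (mate v) (mate w)"
proof
  interpret Nx: quaternion_like "out_nbhd V E x0" E using quaternion_like_out_nbhd[OF x0_in_V] .
  assume "mate w = mate v"
  then have "\<forall>c\<in>out_nbhd V E x0. E v c \<longrightarrow> E w c"
    using mate_succ_iff_succ[OF assms(1)] mate_succ_iff_succ[OF assms(2)] by auto
  then show False using Nx.out_nbhd_determines assms by auto
next
  show "\<not> E (mate v) (mate w)"
    using mate_succ_iff_x0_succ[OF assms(1,4)] mate_pred[OF assms(2)] edge_asym by blast
qed

lemma mate_rel_common_succ:
  assumes H: "a \<in> H_vert" "b \<in> H_vert" "c \<in> H_vert" "c' \<in> H_vert" "d \<in> H_vert"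
    and "a \<noteq> b" "mate_rel a b" "H_edge a d" "H_edge b d" "H_edge a c" "H_edge a c'"
    and "mate_rel c b" "mate_rel c' b"
  shows "c = c'"
proof -
  let ?v = "lift a" and ?w = "lift b"
  have x0: "E x0 ?v" "E x0 ?w" "E x0 (lift c)" "E x0 (lift c')" "E x0 (lift d)"
    using x0_succ_lift H by auto
  have "?v \<noteq> ?w" using lift_inj H \<open>a \<noteq> b\<close> by blast
  interpret Nv: quaternion_like "out_nbhd V E ?v" E using quaternion_like_out_nbhd edge_in_V x0 by blast
  let ?S = "{y\<in>out_nbhd V E ?v. E (mate ?v) y \<and> E y (mate ?w)}"
  have "card ?S \<le> 1"
    using Nv.few_paths_if_common_succ[of "mate ?v" "mate ?w" "lift d"]
      mates_non_adjacent[OF x0(1,2) \<open>?v \<noteq> ?w\<close>] assms x0 mate_succ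
      mate_succ_iff_succ mate_succ_iff_x0_succ edge_lift_iff
    by (simp add: mate_rel_def)
  moreover have "finite ?S"
    using finite_out_nbhd edge_in_V x0(1) by (blast intro: finite_subset[of ?S "out_nbhd V E ?v"])
  ultimately have "\<forall>y\<in>?S. \<forall>y'\<in>?S. y = y'" using card_le_Suc0_iff_eq by auto
  moreover have "lift c \<in> ?S" "lift c' \<in> ?S"
    using assms x0 mate_succ_iff_x0_succ edge_lift_iff by (auto simp: mate_rel_def)
  ultimately have "lift c = lift c'" by blast
  then show ?thesis using lift_inj H by blast
qed

lemma mate_rel_no_common_succ:
  assumes H: "a \<in> H_vert" "b \<in> H_vert" "c \<in> H_vert"
    and "a \<noteq> b" "mate_rel a b" and no_common: "\<forall>d\<in>H_vert. H_edge a d \<longrightarrow> \<not> H_edge b d"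
    and "H_edge a c"
  shows "mate_rel c b"
proof -
  let ?v = "lift a" and ?w = "lift b"
  have x0: "E x0 ?v" "E x0 ?w" "E x0 (lift c)" using x0_succ_lift H by auto
  have "?v \<noteq> ?w" using lift_inj H \<open>a \<noteq> b\<close> by blast
  interpret Nv: quaternion_like "out_nbhd V E ?v" E using quaternion_like_out_nbhd edge_in_V x0 by blast
  have "\<not> E (mate ?w) y" if "E ?v y" "E (mate ?v) y" for y
  proof -
    have "E x0 y" using that mate_succ_iff_x0_succ[OF x0(1)] by blast
    then have "H_edge a (\<phi>0 y)" "\<phi>0 (y) \<in> H_vert"
      using that edge_lift_iff[OF H(1) \<phi>0_in_H_vert] lift_\<phi>0 \<phi>0_in_H_vert by auto
    then show ?thesis
      using no_common edge_lift_iff[OF H(2)] mate_succ_iff_succ[OF x0(2) \<open>E x0 y\<close>] lift_\<phi>0[OF \<open>E x0 y\<close>]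
      by metis
  qed
  then show ?thesis
    using Nv.all_paths_if_no_common_succ[of "mate ?v" "mate ?w" "lift c"]
      mates_non_adjacent[OF x0(1,2) \<open>?v \<noteq> ?w\<close>] assms x0 mate_succ mate_succ_iff_x0_succ edge_lift_iff
    by (simp add: mate_rel_def)
qed

lemma automorphism_mate:
  assumes g: "automorphism V E g" "g x0 = x0" and "E x0 w"
  shows "g (mate w) = mate (g w)"
proof -
  have V: "w \<in> V" "mate w \<in> V" using edge_in_V assms(3) mate_pred[OF assms(3)] by auto
  have x0_gw: "E x0 (g w)" using automorphism_edge_iff[OF g(1) x0_in_V V(1)] g(2) assms(3) by simp
  have "E (g (mate w)) x0"
    using automorphism_edge_iff[OF g(1) V(2) x0_in_V] g(2) mate_pred[OF assms(3)] by simp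
  moreover have "E (g (mate w)) d" if "E (g w) d" "E x0 d" for d
  proof -
    have "d \<in> g ` V" using automorphism_image[OF g(1)] edge_in_V[OF that(1)] by simp
    then obtain d' where d': "d' \<in> V" "d = g d'" by blast
    have "E w d'" using automorphism_edge_iff[OF g(1) V(1) d'(1)] that(1) d'(2) by simp
    moreover have "E x0 d'" using automorphism_edge_iff[OF g(1) x0_in_V d'(1)] that(2) d'(2) g(2) by simp
    ultimately have "E (mate w) d'" using mate_succ_iff_succ[OF assms(3)] by blast
    then show ?thesis using automorphism_edge_iff[OF g(1) V(2) d'(1)] d'(2) by simp
  qed
  ultimately show ?thesis using mate_unique[OF x0_gw] by blast
qed

lemma mate_rel_invariant:
  assumes \<alpha>: "dg_iso H_vert H_edge H_vert H_edge \<alpha>" and "a \<in> H_vert" "b \<in> H_vert"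
  shows "mate_rel (\<alpha> a) (\<alpha> b) = mate_rel a b"
proof -
  let ?N = "out_nbhd V E x0"
  let ?h = "lift \<circ> (\<alpha> \<circ> \<phi>0)"
  have "dg_iso ?N E ?N E ?h"
    using dg_iso_comp[OF dg_iso_comp[OF dg_iso_out_nbhd_x0 \<alpha>] dg_iso_inv[OF dg_iso_out_nbhd_x0]]
    unfolding lift_def comp_def .
  then have "dg_iso (insert x0 ?N) E (insert x0 ?N) E (\<lambda>y. if y = x0 then x0 else ?h y)"
    by (rule dg_iso_insert_apex) (auto simp: no_loop dest: edge_asym)
  moreover have "insert x0 ?N \<subseteq> V" using x0_in_V by (auto simp: out_nbhd_def)
  moreover have "connected_on E (insert x0 ?N)" by (auto intro: connected_on_if_centre)
  moreover have "finite (insert x0 ?N)" using finite_out_nbhd[OF x0_in_V] by simp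
  ultimately obtain g where g: "automorphism V E g" "\<forall>y\<in>insert x0 ?N. g y = (if y = x0 then x0 else ?h y)"
    using extend_iso by blast
  have "g x0 = x0" using g(2) by simp
  have g_lift: "g (lift h) = lift (\<alpha> h)" if "h \<in> H_vert" for h
    using g(2) x0_succ_lift[OF that] \<phi>0_lift[OF that] no_loop by auto
  have V: "lift a \<in> V" "mate (lift b) \<in> V"
    using x0_succ_lift mate_pred assms(2,3) edge_in_V by blast+
  have "mate_rel (\<alpha> a) (\<alpha> b) \<longleftrightarrow> E (g (lift a)) (mate (g (lift b)))"
    unfolding mate_rel_def using g_lift assms(2,3) by simp
  also have "\<dots> \<longleftrightarrow> E (g (lift a)) (g (mate (lift b)))"
    using automorphism_mate[OF g(1) \<open>g x0 = x0\<close> x0_succ_lift] assms(3) by simp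
  also have "\<dots> \<longleftrightarrow> mate_rel a b"
    unfolding mate_rel_def by (rule automorphism_edge_iff[OF g(1) V])
  finally show ?thesis .
qed

lemma mate_rel_nontrivial: "\<exists>b\<in>H_vert. b \<noteq> (False, 0) \<and> mate_rel (False, 0) b"
proof -
  have "(False, 0) \<in> H_vert" by (simp add: H_vert_def)
  define v where "v = lift (False, 0)"
  have "E x0 v" unfolding v_def by (rule x0_succ_lift) fact
  then obtain u where u: "E v u" "E u x0" "u \<noteq> mate v" using exists_pred_succ_ne_mate by blast
  then obtain w where w: "E x0 w" "u = mate w" using pred_is_mate by blast
  have "\<phi>0 w \<noteq> (False, 0)" using u(3) w lift_\<phi>0 unfolding v_def by metis
  moreover have "mate_rel (False, 0) (\<phi>0 w)" unfolding mate_rel_def using lift_\<phi>0 u(1) w v_def by simp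
  ultimately show ?thesis using \<phi>0_in_H_vert[OF w(1)] by blast
qed

end

lemma (in C_homogeneous_digraph) out_nbhd_not_H:
  assumes "x \<in> V"
  shows "\<not> dg_isomorphic (out_nbhd V E x) E H_vert H_edge"
proof
  assume "dg_isomorphic (out_nbhd V E x) E H_vert H_edge"
  then obtain \<phi> where "dg_iso (out_nbhd V E x) E H_vert H_edge \<phi>" unfolding dg_isomorphic_def ..
  then interpret out_nbhd_H V E x \<phi> using assms by unfold_locales
  obtain b where b: "b \<in> H_vert" "b \<noteq> (False, 0)" "mate_rel (False, 0) b"
    using mate_rel_nontrivial by blast
  have "b = (False, 0)"
    by (rule H_invariant_relation_trivial[OF mate_rel_refl mate_rel_no_back_edge mate_rel_common_succ
          mate_rel_no_common_succ mate_rel_invariant b(1,3)])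
  with b(2) show False ..
qed

lemma C_homogeneous_digraph_conversep:
  assumes "C_homogeneous_digraph V E"
  shows "C_homogeneous_digraph V E\<inverse>\<inverse>"
proof -
  interpret C_homogeneous_digraph V E by fact
  have "connected_on E\<inverse>\<inverse> A = connected_on E A" for A
    unfolding connected_on_def by (simp add: disj_commute)
  moreover have "automorphism V E\<inverse>\<inverse> g = automorphism V E g" for g
    unfolding automorphism_def by (rule dg_iso_conversep)
  ultimately have "C_homogeneous V E\<inverse>\<inverse>"
    using C_homogeneous unfolding C_homogeneous_def dg_iso_conversep by simp
  moreover have "digraph V E\<inverse>\<inverse>" using digraph unfolding digraph_def by auto
  moreover have "locally_finite V E\<inverse>\<inverse>"
    using locally_finite unfolding locally_finite_def by (simp add: disj_commute)
  ultimately show ?thesis by unfold_locales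
qed

lemma out_nbhd_conversep: "out_nbhd V E\<inverse>\<inverse> x = in_nbhd V E x"
  unfolding out_nbhd_def in_nbhd_def by simp

lemma dg_isomorphic_H_conversep:
  assumes "dg_isomorphic N E H_vert H_edge"
  shows "dg_isomorphic N E\<inverse>\<inverse> H_vert H_edge"
proof -
  obtain \<phi> where "dg_iso N E H_vert H_edge \<phi>" using assms unfolding dg_isomorphic_def ..
  then have "dg_iso N E\<inverse>\<inverse> H_vert H_edge\<inverse>\<inverse> \<phi>" by (simp add: dg_iso_conversep)
  then show ?thesis
    unfolding dg_isomorphic_def using dg_iso_comp[OF _ dg_iso_H_reverse] by blast
qed

theorem lemma3p1:
  fixes V :: "'a set" and E :: "'a \<Rightarrow> 'a \<Rightarrow> bool"
  assumes "digraph V E" and "connected_on E V" and "locally_finite V E" and "C_homogeneous V E"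
  shows "\<forall>x\<in>V. \<not> dg_isomorphic (out_nbhd V E x) E H_vert H_edge
              \<and> \<not> dg_isomorphic (in_nbhd V E x) E H_vert H_edge"
proof (intro ballI conjI)
  fix x assume "x \<in> V"
  have D: "C_homogeneous_digraph V E" using assms(1,3,4) by unfold_locales
  show "\<not> dg_isomorphic (out_nbhd V E x) E H_vert H_edge"
    by (rule C_homogeneous_digraph.out_nbhd_not_H[OF D \<open>x \<in> V\<close>])
  have "\<not> dg_isomorphic (in_nbhd V E x) E\<inverse>\<inverse> H_vert H_edge"
    using C_homogeneous_digraph.out_nbhd_not_H[OF C_homogeneous_digraph_conversep[OF D] \<open>x \<in> V\<close>]
    unfolding out_nbhd_conversep .
  then show "\<not> dg_isomorphic (in_nbhd V E x) E H_vert H_edge"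
    using dg_isomorphic_H_conversep by blast
qed

end
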